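(* Let $n\ge 4$. The pure braid group $PBr(D_n)$ is generated by the following elements of $Br(D_n)$ (writing $\mathbf k$ for the generator $y_{\alpha_k}$): (a) for $2\le i\le j\le n$: $\mathbf a_{j,i}=\mathbf j\,(\mathbf{j-1})\cdots(\mathbf{i+1})\,\mathbf i\,\mathbf i\,(\mathbf{i+1})\cdots(\mathbf{j-1})\,\mathbf j$ (so $\mathbf a_{i,i}=\mathbf i^2$); (b) $\mathbf 2'^2$ and, for $3\le j\le n$: $\mathbf a_{j,2'}=\mathbf j\,(\mathbf{j-1})\cdots\mathbf 3\,\mathbf 2'\,\mathbf 2'\,\mathbf 3\cdots(\mathbf{j-1})\,\mathbf j$; (c) for $3\le i\le j\le n$: $\mathbf b_{j,i}=\mathbf j\,(\mathbf{j-1})\cdots\mathbf 3\,\mathbf 2\,\mathbf 2'\,\mathbf 3\cdots(\mathbf{i-1})\,\mathbf i\,\mathbf i\,(\mathbf{i-1})\cdots\mathbf 3\,\mathbf 2'\,\mathbf 2\,\mathbf 3\cdots(\mathbf{j-1})\,\mathbf j$ (so for instance $\mathbf b_{j,3}=\mathbf j\cdots\mathbf 3\,\mathbf 2\,\mathbf 2'\,\mathbf 3\,\mathbf 3\,\mathbf 2'\,\mathbf 2\,\mathbf 3\cdots\mathbf j$).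
   Context: $Br(D_n)$ is the braid group of type $D_n$: generators $y_k$, $k\in\{2,2',3,\dots,n\}$, with $y_ky_l=y_ly_k$ when $k,l$ are non-adjacent and $y_ky_ly_k=y_ly_ky_l$ when adjacent, where the adjacent pairs are $\{2,3\}$, $\{2',3\}$ and $\{k,k+1\}$ for $3\le k\le n-1$ (Dynkin diagram of $D_n$ with fork nodes $2,2'$). The Weyl group $W(D_n)$ is the quotient of $Br(D_n)$ by the relations $y_k^2=1$, and $PBr(D_n)$ is the kernel of $Br(D_n)\to W(D_n)$. *)

theory Defs
  imports Main
begin

text \<open>Generators of Br(D_n): Y k stands for y_k (2 <= k <= n), Y2' for y_2'.\<close>
datatype dgen = Y nat | Y2'

text \<open>Words in the free group on the generators: a letter (g, e) is g if e = False
  and g^-1 if e = True.\<close>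
type_synonym dword = "(dgen \<times> bool) list"

definition valid_gen :: "nat \<Rightarrow> dgen \<Rightarrow> bool" where
  "valid_gen n g = (case g of Y k \<Rightarrow> 2 \<le> k \<and> k \<le> n | Y2' \<Rightarrow> True)"

definition valid_word :: "nat \<Rightarrow> dword \<Rightarrow> bool" where
  "valid_word n w = (\<forall>x \<in> set w. valid_gen n (fst x))"

text \<open>Adjacency in the Dynkin diagram of D_n: {2,3}, {2',3}, {k,k+1} for 3 <= k <= n-1.\<close>
definition adj :: "nat \<Rightarrow> dgen \<Rightarrow> dgen \<Rightarrow> bool" where
  "adj n g h = (n \<ge> 3 \<and>
     ({g, h} = {Y 2, Y 3} \<or> {g, h} = {Y2', Y 3} \<or>
      (\<exists>k. 3 \<le> k \<and> k + 1 \<le> n \<and> {g, h} = {Y k, Y (k + 1)})))"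

text \<open>Word equivalence: for c = False this is equality in Br(D_n) (group presentation);
  for c = True the extra relations y^2 = 1 are added, i.e. equality in W(D_n).\<close>
inductive drel :: "bool \<Rightarrow> nat \<Rightarrow> dword \<Rightarrow> dword \<Rightarrow> bool" for c :: bool and n :: nat where
  refl: "drel c n w w"
| sym: "drel c n u v \<Longrightarrow> drel c n v u"
| trans: "drel c n u v \<Longrightarrow> drel c n v w \<Longrightarrow> drel c n u w"
| ctxt: "drel c n u v \<Longrightarrow> drel c n (p @ u @ q) (p @ v @ q)"
| free: "valid_gen n g \<Longrightarrow> drel c n [(g, b), (g, \<not> b)] []"
| comm: "valid_gen n g \<Longrightarrow> valid_gen n h \<Longrightarrow> \<not> adj n g h \<Longrightarrow>
           drel c n [(g, False), (h, False)] [(h, False), (g, False)]"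
| braid: "adj n g h \<Longrightarrow>
           drel c n [(g, False), (h, False), (g, False)] [(h, False), (g, False), (h, False)]"
| invol: "c \<Longrightarrow> valid_gen n g \<Longrightarrow> drel c n [(g, False), (g, False)] []"

abbreviation br_eq :: "nat \<Rightarrow> dword \<Rightarrow> dword \<Rightarrow> bool" where
  "br_eq \<equiv> drel False"

abbreviation weyl_eq :: "nat \<Rightarrow> dword \<Rightarrow> dword \<Rightarrow> bool" where
  "weyl_eq \<equiv> drel True"

definition inv_word :: "dword \<Rightarrow> dword" where
  "inv_word w = rev (map (\<lambda>(g, e). (g, \<not> e)) w)"

definition up :: "nat \<Rightarrow> nat \<Rightarrow> dword" where
  "up i j = map (\<lambda>k. (Y k, False)) [i..<Suc j]"

definition down :: "nat \<Rightarrow> nat \<Rightarrow> dword" where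
  "down j i = rev (up i j)"

definition a_gen :: "nat \<Rightarrow> nat \<Rightarrow> dword" where
  "a_gen j i = down j i @ up i j"

definition a2'_gen :: "nat \<Rightarrow> dword" where
  "a2'_gen j = down j 3 @ [(Y2', False), (Y2', False)] @ up 3 j"

definition b_gen :: "nat \<Rightarrow> nat \<Rightarrow> dword" where
  "b_gen j i = down j 3 @ [(Y 2, False), (Y2', False)] @ up 3 i @ down i 3
               @ [(Y2', False), (Y 2, False)] @ up 3 j"

definition pure_gens :: "nat \<Rightarrow> dword set" where
  "pure_gens n =
     {a_gen j i | i j. 2 \<le> i \<and> i \<le> j \<and> j \<le> n}
   \<union> {[(Y2', False), (Y2', False)]}
   \<union> {a2'_gen j | j. 3 \<le> j \<and> j \<le> n}
   \<union> {b_gen j i | i j. 3 \<le> i \<and> i \<le> j \<and> j \<le> n}"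

end

theory Submission
  imports Defs
begin

(* Every listed generator has the form u (rev u) for a positive word u, so it dies in W(D_n).
   Conversely, the kernel of Br(D_n) -> W(D_n) is the normal closure of the squares y^2 of
   the generators, so it suffices that the subgroup H generated by the list contains these
   squares and is normalised by every generator y.  Let rho be the anti-automorphism of
   Br(D_n) reversing words and palin g = g rho(g).  Each listed element is palin g for a
   positive word g, and y (palin g) y^-1 = palin (y g) y^-2, so everything reduces to
   palin (y g) \<in> H for each generator y and each listed g.  This is a case analysis on
   the position of y relative to g; all cases follow from the braid relations, through a
   handful of identities valid in any group.  Groups are written additively below
   (class group_add), so palin g = g + rho g. *)

section \<open>Braid identities in groups\<close>

abbreviation braids :: "'g::group_add \<Rightarrow> 'g \<Rightarrow> bool" where
  "braids x y \<equiv> x + y + x = y + x + y"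

abbreviation commutes :: "'g::group_add \<Rightarrow> 'g \<Rightarrow> bool" where
  "commutes x y \<equiv> x + y = y + x"

lemmas group_normalize = add.assoc diff_conv_add_uminus minus_add add_minus_cancel
  minus_add_cancel minus_minus right_minus left_minus add_0_left add_0_right minus_zero

lemma conj_add: "(c::'g::group_add) + (a + b) - c = (c + a - c) + (c + b - c)"
  by (simp only: group_normalize)

lemma conj_uminus: "(c::'g::group_add) + - a - c = - (c + a - c)"
  by (simp only: group_normalize)

lemma conj_commuting:
  fixes x V :: "'g::group_add"
  assumes "commutes x V"
  shows "V + x - V = x"
proof -
  have "V + x - V = x + V - V" by (simp only: assms)
  also have "\<dots> = x" by (rule add_diff_cancel)
  finally show ?thesis .
qed

lemma conj_commuting_double:
  fixes x V :: "'g::group_add"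
  assumes "commutes x V"
  shows "V + (x + x) - V = x + x"
  by (simp only: conj_add conj_commuting[OF assms])

lemma commute_through_add:
  fixes x y z a b :: "'g::group_add"
  assumes "x + a = a + y" and "y + b = b + z"
  shows "x + (a + b) = (a + b) + z"
proof -
  have "x + (a + b) = (x + a) + b" by (simp only: add.assoc)
  also have "\<dots> = a + (y + b)" by (simp only: assms(1) add.assoc)
  also have "\<dots> = (a + b) + z" by (simp only: assms(2) add.assoc)
  finally show ?thesis .
qed

lemma braid_conj:
  fixes x y :: "'g::group_add"
  assumes r: "braids x y"
  shows "x + y - x = -y + x + y"
proof -
  have "-y + x + y = -y + (x + y + x) - x" by (simp only: group_normalize)
  also have "\<dots> = -y + (y + x + y) - x" by (simp only: r)
  also have "\<dots> = x + y - x" by (simp only: group_normalize)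
  finally show ?thesis by simp
qed

lemma braid_conj_double:
  fixes x y :: "'g::group_add"
  assumes r: "braids x y"
  shows "x + (y + y) - x = -y + (x + x) + y"
proof -
  have "x + (y + y) - x = (x + y - x) + (x + y - x)" by (simp only: group_normalize)
  also have "\<dots> = (-y + x + y) + (-y + x + y)" by (simp only: braid_conj[OF r])
  also have "\<dots> = -y + (x + x) + y" by (simp only: group_normalize)
  finally show ?thesis .
qed

lemma braid_double_sandwich:
  fixes a b :: "'g::group_add"
  assumes r: "braids a b"
  shows "a + (b + b) + a = -b + (a + a) + b + (a + a)"
proof -
  have "a + (b + b) + a = (a + (b + b) - a) + (a + a)" by (simp only: group_normalize)
  also have "\<dots> = -b + (a + a) + b + (a + a)" by (simp only: braid_conj_double[OF r])
  finally show ?thesis .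
qed

text \<open>In the next lemmas \<open>a\<close>, \<open>b\<close>, \<open>c\<close> form a Dynkin diagram of type \<open>A\<^sub>3\<close>
  with \<open>b\<close> in the middle.\<close>

lemma A3_conj_conj:
  fixes a b c :: "'g::group_add"
  assumes ab: "braids a b" and cb: "braids c b" and ac: "commutes a c"
  shows "-c + (b + a - b) + c = (b + a + c) + b - (b + a + c)"
proof -
  have r1: "b + a - b = -a + b + a" using braid_conj[of b a] ab by simp
  have r2: "c + b - c = -b + c + b" using braid_conj[of c b] cb by simp
  have r3: "-c + b + c = b + c - b" using braid_conj[of b c] cb by simp
  have r4: "b - a - b = -a - b + a"
  proof -
    have "b - a - b = - (b + a - b)" by (simp only: group_normalize)
    also have "\<dots> = - (-a + b + a)" by (simp only: r1)
    also have "\<dots> = -a - b + a" by (simp only: group_normalize)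
    finally show ?thesis .
  qed
  have ac': "-c + -a = -a + -c" using ac by (metis minus_add)
  have ca': "c + -a = -a + c"
  proof -
    have "c + -a = -a + (a + c) + -a" by (simp only: group_normalize)
    also have "\<dots> = -a + (c + a) + -a" by (simp only: ac)
    also have "\<dots> = -a + c" by (simp only: group_normalize)
    finally show ?thesis .
  qed
  have "-c + (b + a - b) + c = -c + (-a + b + a) + c" by (simp only: r1)
  also have "\<dots> = (-c + -a) + b + (a + c)" by (simp only: group_normalize)
  also have "\<dots> = (-a + -c) + b + (c + a)" by (simp only: ac ac')
  also have "\<dots> = -a + (-c + b + c) + a" by (simp only: group_normalize)
  also have "\<dots> = -a + (b + c - b) + a" by (simp only: r3)
  finally have lhs: "-c + (b + a - b) + c = -a + (b + c - b) + a" .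
  have "(b + a + c) + b - (b + a + c) = b + a + (c + b - c) - a - b"
    by (simp only: group_normalize)
  also have "\<dots> = b + a + (-b + c + b) - a - b" by (simp only: r2)
  also have "\<dots> = (b + a - b) + c + (b - a - b)" by (simp only: group_normalize)
  also have "\<dots> = (-a + b + a) + c + (-a - b + a)" by (simp only: r1 r4)
  also have "\<dots> = -a + b + (a + c + -a) + - b + a" by (simp only: group_normalize)
  also have "\<dots> = -a + b + (c + a + -a) + - b + a" by (simp only: ac)
  also have "\<dots> = -a + (b + c - b) + a" by (simp only: group_normalize)
  finally show ?thesis using lhs by simp
qed

lemma A3_conj_double:
  fixes a b c :: "'g::group_add"
  assumes ab: "braids a b" and cb: "braids c b" and ac: "commutes a c"
  shows "c + (b + (a + a) - b) - c
    = (c + c) + ((b + a + c) + (b + b) - (b + a + c)) - (c + c)"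
proof -
  define Z where "Z = (b + a + c) + b - (b + a + c)"
  have "b + a - b = c + (-c + (b + a - b) + c) - c" by (simp only: group_normalize)
  also have "\<dots> = c + Z - c" by (simp only: A3_conj_conj[OF ab cb ac] Z_def)
  finally have baZ: "b + a - b = c + Z - c" .
  have "c + (b + (a + a) - b) - c = c + ((b + a - b) + (b + a - b)) - c"
    by (simp only: group_normalize)
  also have "\<dots> = c + ((c + Z - c) + (c + Z - c)) - c" by (simp only: baZ)
  also have "\<dots> = (c + c) + ((b + a + c) + (b + b) - (b + a + c)) - (c + c)"
    by (simp only: group_normalize Z_def)
  finally show ?thesis .
qed

lemma A3_word_swap:
  fixes a b c :: "'g::group_add"
  assumes ab: "braids a b" and cb: "braids c b" and ac: "commutes a c"
  shows "c + b + a + c + b = b + a + c + b + a"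
proof -
  have "c + b + a + c + b = (c + b) + (a + c) + b" by (simp only: add.assoc)
  also have "\<dots> = (c + b) + (c + a) + b" by (simp only: ac)
  also have "\<dots> = (c + b + c) + a + b" by (simp only: add.assoc)
  also have "\<dots> = (b + c + b) + a + b" by (simp only: cb)
  also have "\<dots> = b + c + (b + a + b)" by (simp only: add.assoc)
  also have "\<dots> = b + c + (a + b + a)" by (simp only: ab)
  also have "\<dots> = b + (c + a) + b + a" by (simp only: add.assoc)
  also have "\<dots> = b + (a + c) + b + a" by (simp only: ac)
  also have "\<dots> = b + a + c + b + a" by (simp only: add.assoc)
  finally show ?thesis .
qed

abbreviation four_braids :: "'g::group_add \<Rightarrow> 'g \<Rightarrow> bool" where
  "four_braids x y \<equiv> x + y + x + y = y + x + y + x"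

lemma A3_four_braids:
  fixes a b c :: "'g::group_add"
  assumes ab: "braids a b" and cb: "braids c b" and ac: "commutes a c"
  shows "four_braids (a + c) b"
proof -
  have "(a + c) + b + (a + c) + b = a + (c + b + a + c + b)" by (simp only: add.assoc)
  also have "\<dots> = a + (b + a + c + b + a)" by (simp only: A3_word_swap[OF ab cb ac])
  also have "\<dots> = (a + b + a) + c + b + a" by (simp only: add.assoc)
  also have "\<dots> = (b + a + b) + c + b + a" by (simp only: ab)
  also have "\<dots> = b + a + (b + c + b) + a" by (simp only: add.assoc)
  also have "\<dots> = b + a + (c + b + c) + a" by (simp only: cb)
  also have "\<dots> = b + a + c + b + (c + a)" by (simp only: add.assoc)
  also have "\<dots> = b + a + c + b + (a + c)" by (simp only: ac)
  also have "\<dots> = b + (a + c) + b + (a + c)" by (simp only: add.assoc)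
  finally show ?thesis .
qed

lemma four_braids_conj:
  fixes y p q :: "'g::group_add"
  assumes yp: "four_braids y p" and yq: "commutes y q" and pq: "braids p q"
  shows "four_braids (p + y + p) q"
proof -
  have "(p + y + p) + q + (p + y + p) + q = p + y + (p + q + p) + y + p + q"
    by (simp only: add.assoc)
  also have "\<dots> = p + y + (q + p + q) + y + p + q" by (simp only: pq)
  also have "\<dots> = p + y + q + p + (q + y) + p + q" by (simp only: add.assoc)
  also have "\<dots> = p + y + q + p + (y + q) + p + q" by (simp only: yq)
  also have "\<dots> = p + y + q + p + y + (q + p + q)" by (simp only: add.assoc)
  also have "\<dots> = p + y + q + p + y + (p + q + p)" by (simp only: pq)
  also have "\<dots> = p + (y + q) + p + y + p + q + p" by (simp only: add.assoc)
  also have "\<dots> = p + (q + y) + p + y + p + q + p" by (simp only: yq)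
  also have "\<dots> = p + q + (y + p + y + p) + q + p" by (simp only: add.assoc)
  also have "\<dots> = p + q + (p + y + p + y) + q + p" by (simp only: yp)
  also have "\<dots> = (p + q + p) + y + p + y + q + p" by (simp only: add.assoc)
  also have "\<dots> = (q + p + q) + y + p + y + q + p" by (simp only: pq)
  also have "\<dots> = q + p + (q + y) + p + y + q + p" by (simp only: add.assoc)
  also have "\<dots> = q + p + (y + q) + p + y + q + p" by (simp only: yq)
  also have "\<dots> = q + p + y + q + p + (y + q) + p" by (simp only: add.assoc)
  also have "\<dots> = q + p + y + q + p + (q + y) + p" by (simp only: yq)
  also have "\<dots> = q + p + y + (q + p + q) + y + p" by (simp only: add.assoc)
  also have "\<dots> = q + p + y + (p + q + p) + y + p" by (simp only: pq)
  also have "\<dots> = q + (p + y + p) + q + (p + y + p)" by (simp only: add.assoc)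
  finally show ?thesis .
qed

lemma four_braids_conj_double:
  fixes y p :: "'g::group_add"
  assumes yp: "four_braids y p"
  shows "-y + (p + p) + y = p + y + (p + p) - y - p"
proof -
  have "p + y + (p + p) - y - p = -y + (y + p + y + p) + p - y - p"
    by (simp only: group_normalize)
  also have "\<dots> = -y + (p + y + p + y) + p - y - p" by (simp only: yp)
  also have "\<dots> = -y + p + (y + p + y + p) - y - p" by (simp only: group_normalize)
  also have "\<dots> = -y + p + (p + y + p + y) - y - p" by (simp only: yp)
  also have "\<dots> = -y + (p + p) + y" by (simp only: group_normalize)
  finally show ?thesis by simp
qed

section \<open>Generated subgroups and reversal\<close>

inductive_set gen_subgroup :: "'g::group_add set \<Rightarrow> 'g set" for S where
  generator: "g \<in> S \<Longrightarrow> g \<in> gen_subgroup S"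
| zero: "0 \<in> gen_subgroup S"
| add: "a \<in> gen_subgroup S \<Longrightarrow> b \<in> gen_subgroup S \<Longrightarrow> a + b \<in> gen_subgroup S"
| neg: "a \<in> gen_subgroup S \<Longrightarrow> - a \<in> gen_subgroup S"

lemma gen_subgroup_diff:
  "a \<in> gen_subgroup S \<Longrightarrow> b \<in> gen_subgroup S \<Longrightarrow> a - b \<in> gen_subgroup S"
  by (simp only: diff_conv_add_uminus) (intro gen_subgroup.add gen_subgroup.neg)

lemma gen_subgroup_conj:
  "c \<in> gen_subgroup S \<Longrightarrow> a \<in> gen_subgroup S \<Longrightarrow> c + a - c \<in> gen_subgroup S"
  by (intro gen_subgroup_diff gen_subgroup.add)

lemma gen_subgroup_conj_closed:
  assumes gens: "\<And>g. g \<in> S \<Longrightarrow> x + g - x \<in> gen_subgroup S"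
    and h: "h \<in> gen_subgroup S"
  shows "x + h - x \<in> gen_subgroup S"
  using h
proof (induction h rule: gen_subgroup.induct)
  case (generator g)
  then show ?case by (rule gens)
next
  case zero
  then show ?case by (simp add: gen_subgroup.zero)
next
  case (add a b)
  then show ?case by (simp only: conj_add) (rule gen_subgroup.add)
next
  case (neg a)
  then show ?case by (simp only: conj_uminus) (rule gen_subgroup.neg)
qed

lemma gen_subgroup_conj_inverse:
  assumes "x + x \<in> gen_subgroup S" and "x + h - x \<in> gen_subgroup S"
  shows "- x + h + x \<in> gen_subgroup S"
proof -
  have "- x + h + x = - (x + x) + (x + h - x) + (x + x)" by (simp only: group_normalize)
  then show ?thesis
    using gen_subgroup.add[OF gen_subgroup.add[OF gen_subgroup.neg[OF assms(1)] assms(2)] assms(1)]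
    by (simp only:)
qed

locale reversal =
  fixes rho :: "'g::group_add \<Rightarrow> 'g"
  assumes rho_add: "rho (x + y) = rho y + rho x"
begin

lemma rho_zero: "rho 0 = 0"
proof -
  have "rho 0 + rho 0 = rho 0 + 0" using rho_add[of 0 0] by simp
  then show ?thesis by (rule add_left_imp_eq)
qed

lemma rho_sum_list: "rho (sum_list xs) = sum_list (rev (map rho xs))"
  by (induction xs) (simp_all add: rho_zero rho_add)

definition palin :: "'g \<Rightarrow> 'g" where
  "palin g = g + rho g"

lemma palin_zero: "palin 0 = 0"
  by (simp add: palin_def rho_zero)

lemma palin_add: "palin (g + h) = g + palin h - g + palin g"
  by (simp only: palin_def rho_add group_normalize)

lemma palin_fixed: "rho x = x \<Longrightarrow> palin x = x + x"
  by (simp add: palin_def)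

lemma conj_palin: "V + palin w - V = palin (V + w) - palin V"
  by (simp only: palin_add group_normalize)

lemma conj_double_fixed: "rho y = y \<Longrightarrow> g + (y + y) - g = palin (g + y) - palin g"
  by (simp only: palin_add palin_fixed group_normalize)

lemma conj_palin_mem:
  "palin (V + w) \<in> gen_subgroup S \<Longrightarrow> palin V \<in> gen_subgroup S
    \<Longrightarrow> V + palin w - V \<in> gen_subgroup S"
  by (simp only: conj_palin) (rule gen_subgroup_diff)

lemma conj_double_fixed_mem:
  "rho y = y \<Longrightarrow> palin (g + y) \<in> gen_subgroup S \<Longrightarrow> palin g \<in> gen_subgroup S
    \<Longrightarrow> g + (y + y) - g \<in> gen_subgroup S"
  by (simp only: conj_double_fixed) (rule gen_subgroup_diff)

lemma conj_mem_of_palin_mem: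
  assumes r: "rho x = x" and hx: "x + x \<in> gen_subgroup S"
    and hg: "palin (x + g) \<in> gen_subgroup S"
  shows "x + palin g - x \<in> gen_subgroup S"
proof -
  have "x + palin g - x = palin (x + g) - (x + x)"
    by (simp only: palin_add palin_fixed[OF r] group_normalize)
  then show ?thesis using hg hx by (simp only:) (rule gen_subgroup_diff)
qed

lemma palin_commuting_mem:
  assumes rx: "rho x = x" and ry: "rho y = y" and c: "x + g = g + y"
    and hg: "palin g \<in> gen_subgroup S" and hx: "x + x \<in> gen_subgroup S"
  shows "palin (x + g) \<in> gen_subgroup S"
proof -
  have c': "rho g + x = y + rho g" using arg_cong[OF c, of rho] by (simp add: rho_add rx ry)
  have "x + palin g - x = (x + g) + rho g - x" by (simp only: palin_def group_normalize)
  also have "\<dots> = g + (y + rho g) - x" by (simp only: c add.assoc)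
  also have "\<dots> = g + (rho g + x) - x" by (simp only: c')
  also have "\<dots> = palin g" by (simp only: palin_def group_normalize)
  finally have "x + palin g - x = palin g" .
  moreover have "palin (x + g) = x + palin g - x + (x + x)"
    by (simp only: palin_add palin_fixed[OF rx])
  ultimately show ?thesis using hg hx by (simp add: gen_subgroup.add)
qed

lemma palin_double_mem:
  assumes rx: "rho x = x" and hg: "palin g \<in> gen_subgroup S" and hx: "x + x \<in> gen_subgroup S"
  shows "palin (x + (x + g)) \<in> gen_subgroup S"
proof -
  have "palin (x + (x + g)) = (x + x) + palin g + (x + x)"
    by (simp only: palin_def rho_add rx group_normalize)
  then show ?thesis using hg hx by (simp add: gen_subgroup.add)
qed

lemma palin_braid_mem:
  assumes ra: "rho a = a" and rb: "rho b = b" and br: "braids a b" and aV: "commutes a V"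
    and h0: "palin V \<in> gen_subgroup S" and h1: "palin (V + b) \<in> gen_subgroup S"
    and h2: "palin (V + b + a) \<in> gen_subgroup S" and ha: "a + a \<in> gen_subgroup S"
  shows "palin (a + (V + b)) \<in> gen_subgroup S"
proof -
  have "palin (a + b) = a + (b + b) + a" by (simp only: palin_def rho_add ra rb group_normalize)
  also have "\<dots> = -b + (a + a) + b + (a + a)" by (rule braid_double_sandwich[OF br])
  also have "\<dots> = - (b + b) + palin (b + a) + (a + a)"
    by (simp only: palin_def rho_add ra rb group_normalize)
  finally have ab: "palin (a + b) = - (b + b) + palin (b + a) + (a + a)" .
  have m1: "V + (b + b) - V \<in> gen_subgroup S" by (rule conj_double_fixed_mem[OF rb h1 h0])
  have m2: "V + palin (b + a) - V \<in> gen_subgroup S"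
    using conj_palin_mem[of V "b + a"] h2 h0 by (simp only: add.assoc)
  have "a + (V + b) = V + (a + b)" by (simp only: add.assoc[symmetric] aV)
  then have "palin (a + (V + b)) = V + palin (a + b) - V + palin V"
    by (simp only: palin_add)
  also have "\<dots> = - (V + (b + b) - V) + (V + palin (b + a) - V) + (V + (a + a) - V) + palin V"
    by (simp only: ab conj_add conj_uminus)
  also have "\<dots> = - (V + (b + b) - V) + (V + palin (b + a) - V) + (a + a) + palin V"
    by (simp only: conj_commuting_double[OF aV])
  finally show ?thesis
    by (simp only:) (intro m1 m2 ha h0 gen_subgroup.add gen_subgroup.neg)
qed

lemma palin_braid_shift_mem:
  assumes rx: "rho x = x" and ry: "rho y = y" and br: "braids y x" and c: "x + W = W + y"
    and h0: "palin W \<in> gen_subgroup S" and h1: "palin (W + x) \<in> gen_subgroup S"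
    and h2: "palin (W + x + y) \<in> gen_subgroup S" and hx: "x + x \<in> gen_subgroup S"
  shows "palin (x + (W + x)) \<in> gen_subgroup S"
proof -
  have "palin (y + x) = y + (x + x) + y" by (simp only: palin_def rho_add rx ry group_normalize)
  also have "\<dots> = -x + (y + y) + x + (y + y)" by (rule braid_double_sandwich[OF br])
  also have "\<dots> = - (x + x) + palin (x + y) + (y + y)"
    by (simp only: palin_def rho_add rx ry group_normalize)
  finally have yx: "palin (y + x) = - (x + x) + palin (x + y) + (y + y)" .
  have "W + y - W = x + W - W" by (simp only: c)
  then have Wyy: "W + (y + y) - W = x + x" by (simp only: conj_add add_diff_cancel)
  have m1: "W + (x + x) - W \<in> gen_subgroup S" by (rule conj_double_fixed_mem[OF rx h1 h0])
  have m2: "W + palin (x + y) - W \<in> gen_subgroup S"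
    using conj_palin_mem[of W "x + y"] h2 h0 by (simp only: add.assoc)
  have "x + (W + x) = W + (y + x)" by (simp only: add.assoc[symmetric] c)
  then have "palin (x + (W + x)) = W + palin (y + x) - W + palin W"
    by (simp only: palin_add)
  also have "\<dots> = - (W + (x + x) - W) + (W + palin (x + y) - W) + (W + (y + y) - W) + palin W"
    by (simp only: yx conj_add conj_uminus)
  also have "\<dots> = - (W + (x + x) - W) + (W + palin (x + y) - W) + (x + x) + palin W"
    by (simp only: Wyy)
  finally show ?thesis
    by (simp only:) (intro m1 m2 hx h0 gen_subgroup.add gen_subgroup.neg)
qed

lemma palin_A3_mem:
  assumes rx: "rho x = x" and ry: "rho y = y" and rb: "rho b = b"
    and xb: "braids x b" and yb: "braids y b" and xy: "commutes y x" and xV: "commutes x V"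
    and h0: "palin V \<in> gen_subgroup S" and h1: "palin (V + b) \<in> gen_subgroup S"
    and h2: "palin (V + b + x) \<in> gen_subgroup S" and h3: "palin (V + b + y + x) \<in> gen_subgroup S"
    and h4: "palin (V + b + y + x + b) \<in> gen_subgroup S" and hx: "x + x \<in> gen_subgroup S"
  shows "palin (x + (V + b + y)) \<in> gen_subgroup S"
proof -
  define R where "R = (b + y + x) + (b + b) - (b + y + x)"
  have e1: "palin (x + b + y) = (x + (b + (y + y) - b) - x) + (x + (b + b) + x)"
    by (simp only: palin_def rho_add rx ry rb group_normalize)
  have e2: "x + (b + b) + x = - (b + b) + palin (b + x) + (x + x)"
    using braid_double_sandwich[OF xb] by (simp only: palin_def rho_add rx rb group_normalize)
  have xxV: "V + (x + x) = (x + x) + V" by (metis xV add.assoc)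
  have "V + ((x + x) + R - (x + x)) - V = (V + (x + x)) + R - (V + (x + x))"
    by (simp only: group_normalize)
  also have "\<dots> = ((x + x) + V) + R - ((x + x) + V)" by (simp only: xxV)
  also have "\<dots> = (x + x) + (V + R - V) - (x + x)" by (simp only: group_normalize)
  finally have e3: "V + ((x + x) + R - (x + x)) - V = (x + x) + (V + R - V) - (x + x)" .
  have "V + R - V = (V + b + y + x) + (b + b) - (V + b + y + x)"
    by (simp only: R_def group_normalize)
  then have m1: "V + R - V \<in> gen_subgroup S"
    using conj_double_fixed_mem[OF rb h4 h3] by simp
  have m2: "V + (b + b) - V \<in> gen_subgroup S" by (rule conj_double_fixed_mem[OF rb h1 h0])
  have m3: "V + palin (b + x) - V \<in> gen_subgroup S"
    using conj_palin_mem[of V "b + x"] h2 h0 by (simp only: add.assoc)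
  have "x + (V + b + y) = V + (x + b + y)" by (simp only: add.assoc[symmetric] xV)
  then have "palin (x + (V + b + y)) = V + palin (x + b + y) - V + palin V"
    by (simp only: palin_add)
  also have "\<dots> = V + (((x + x) + R - (x + x)) + (- (b + b) + palin (b + x) + (x + x))) - V
      + palin V"
    using A3_conj_double[OF yb xb xy] by (simp only: e1 e2 R_def)
  also have "\<dots> = (V + ((x + x) + R - (x + x)) - V) + (- (V + (b + b) - V))
       + (V + palin (b + x) - V) + (V + (x + x) - V) + palin V"
    by (simp only: conj_add conj_uminus add.assoc)
  also have "\<dots> = ((x + x) + (V + R - V) - (x + x)) + (- (V + (b + b) - V))
       + (V + palin (b + x) - V) + (x + x) + palin V"
    by (simp only: e3 conj_commuting_double[OF xV])
  finally show ?thesis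
    by (simp only:) (intro m1 m2 m3 hx h0 gen_subgroup.add gen_subgroup.neg gen_subgroup_conj)
qed

end

section \<open>Braid groups of type D, abstractly\<close>

text \<open>\<open>s k\<close> and \<open>t\<close> play the roles of the generators \<open>y\<^sub>k\<close> and \<open>y\<^sub>2'\<close> of \<open>Br(D\<^sub>N)\<close>, and
  \<open>rho\<close> that of the anti-automorphism reversing words.\<close>

locale Dn_braid = reversal rho for rho :: "'g::group_add \<Rightarrow> 'g" +
  fixes N :: nat and s :: "nat \<Rightarrow> 'g" and t :: 'g
  assumes N4: "4 \<le> N"
    and s_commute: "2 \<le> k \<Longrightarrow> l \<le> N \<Longrightarrow> k + 2 \<le> l \<Longrightarrow> commutes (s k) (s l)"
    and s_braid: "2 \<le> k \<Longrightarrow> k + 1 \<le> N \<Longrightarrow> braids (s k) (s (k + 1))"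
    and t_commute: "2 \<le> k \<Longrightarrow> k \<le> N \<Longrightarrow> k \<noteq> 3 \<Longrightarrow> commutes t (s k)"
    and t_braid: "braids t (s 3)"
    and rho_s: "rho (s k) = s k"
    and rho_t: "rho t = t"
begin

definition descend :: "nat \<Rightarrow> nat \<Rightarrow> 'g" where
  "descend j i = sum_list (map s (rev [i..<Suc j]))"

definition ascend :: "nat \<Rightarrow> nat \<Rightarrow> 'g" where
  "ascend i j = sum_list (map s [i..<Suc j])"

definition b_half :: "nat \<Rightarrow> nat \<Rightarrow> 'g" where
  "b_half j i = descend j 3 + s 2 + t + ascend 3 i"

text \<open>The three sets correspond to (a), (b), (c) of the theorem, with \<open>b\<^sub>j\<^sub>,\<^sub>i = palin (b_half j i)\<close>;
  \<open>j = 2\<close> in the middle set gives \<open>palin t = t + t\<close>, the generator \<open>2'\<^sup>2\<close>.\<close>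

definition pure_generators :: "'g set" where
  "pure_generators = {palin (descend j i) | i j. 2 \<le> i \<and> i \<le> j \<and> j \<le> N}
     \<union> {palin (descend j 3 + t) | j. 2 \<le> j \<and> j \<le> N}
     \<union> {palin (b_half j i) | i j. 3 \<le> i \<and> i \<le> j \<and> j \<le> N}"

abbreviation PB :: "'g set" where
  "PB \<equiv> gen_subgroup pure_generators"

lemma descend_empty: "j < i \<Longrightarrow> descend j i = 0"
  by (simp add: descend_def)

lemma ascend_empty: "j < i \<Longrightarrow> ascend i j = 0"
  by (simp add: ascend_def)

lemma descend_Suc: "i \<le> Suc j \<Longrightarrow> descend (Suc j) i = s (Suc j) + descend j i"
  by (simp add: descend_def)

lemma ascend_Suc: "i \<le> Suc j \<Longrightarrow> ascend i (Suc j) = ascend i j + s (Suc j)"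
  by (simp add: ascend_def)

lemma ascend_low: "i \<le> j \<Longrightarrow> ascend i j = s i + ascend (Suc i) j"
  by (simp del: upt_Suc add: ascend_def upt_conv_Cons)

lemma descend_low: "i \<le> j \<Longrightarrow> descend j i = descend j (Suc i) + s i"
  by (simp del: upt_Suc add: descend_def upt_conv_Cons)

lemma descend_self: "1 \<le> k \<Longrightarrow> descend k k = s k"
  using descend_Suc[of k "k - 1"] by (cases k) (auto simp: descend_empty)

lemma rho_descend: "rho (descend j i) = ascend i j"
  by (simp add: descend_def ascend_def rho_sum_list rho_s rev_map[symmetric] o_def)

lemma rho_ascend: "rho (ascend i j) = descend j i"
  by (simp add: descend_def ascend_def rho_sum_list rho_s rev_map o_def)

lemma s_commute_sym:
  "2 \<le> k \<Longrightarrow> 2 \<le> l \<Longrightarrow> k \<le> N \<Longrightarrow> l \<le> N \<Longrightarrow> k + 2 \<le> l \<or> l + 2 \<le> k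
    \<Longrightarrow> commutes (s k) (s l)"
  using s_commute by metis

lemma descend_commute:
  "2 \<le> k \<Longrightarrow> k \<le> N \<Longrightarrow> 2 \<le> i \<Longrightarrow> j \<le> N \<Longrightarrow> k + 2 \<le> i \<or> j + 2 \<le> k
    \<Longrightarrow> commutes (s k) (descend j i)"
proof (induction j)
  case 0
  then show ?case by (simp add: descend_empty)
next
  case (Suc j)
  show ?case
  proof (cases "i \<le> Suc j")
    case False
    then show ?thesis by (simp add: descend_empty)
  next
    case True
    have "commutes (s k) (s (Suc j))" using Suc.prems True by (intro s_commute_sym) auto
    moreover have "commutes (s k) (descend j i)" by (rule Suc.IH) (use Suc.prems in auto)
    ultimately show ?thesis by (simp add: descend_Suc True commute_through_add)
  qed
qed

lemma descend_shift:
  "2 \<le> i \<Longrightarrow> i \<le> k \<Longrightarrow> k + 1 \<le> j \<Longrightarrow> j \<le> N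
    \<Longrightarrow> s k + descend j i = descend j i + s (k + 1)"
proof (induction j)
  case 0
  then show ?case by simp
next
  case (Suc j)
  show ?case
  proof (cases "j = k")
    case True
    have W: "commutes (s (k + 1)) (descend (k - 1) i)"
      using Suc.prems by (intro descend_commute) auto
    have d: "descend (Suc j) i = s (k + 1) + s k + descend (k - 1) i"
      using Suc.prems True descend_Suc[of i j] descend_Suc[of i "k - 1"]
      by (cases k) (auto simp: add.assoc)
    have "s k + descend (Suc j) i = (s k + s (k + 1) + s k) + descend (k - 1) i"
      by (simp add: d add.assoc)
    also have "\<dots> = (s (k + 1) + s k + s (k + 1)) + descend (k - 1) i"
      using Suc.prems by (simp only: s_braid)
    also have "\<dots> = s (k + 1) + s k + (s (k + 1) + descend (k - 1) i)"
      by (simp only: add.assoc)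
    also have "\<dots> = s (k + 1) + s k + (descend (k - 1) i + s (k + 1))" by (simp only: W)
    also have "\<dots> = descend (Suc j) i + s (k + 1)" by (simp add: d add.assoc)
    finally show ?thesis .
  next
    case False
    have "commutes (s k) (s (Suc j))" using Suc.prems False by (intro s_commute_sym) auto
    moreover have "s k + descend j i = descend j i + s (k + 1)"
      by (rule Suc.IH) (use Suc.prems False in auto)
    moreover have "i \<le> Suc j" using Suc.prems by simp
    ultimately show ?thesis by (simp add: descend_Suc commute_through_add)
  qed
qed

lemma t_descend_commute: "2 \<le> i \<Longrightarrow> j \<le> N \<Longrightarrow> 3 < i \<or> j < 3 \<Longrightarrow> commutes t (descend j i)"
proof (induction j)
  case 0
  then show ?case by (simp add: descend_empty)
next
  case (Suc j)
  show ?case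
  proof (cases "i \<le> Suc j")
    case False
    then show ?thesis by (simp add: descend_empty)
  next
    case True
    have "commutes t (s (Suc j))" using Suc.prems True by (intro t_commute) auto
    moreover have "commutes t (descend j i)" by (rule Suc.IH) (use Suc.prems in auto)
    ultimately show ?thesis by (simp add: descend_Suc True commute_through_add)
  qed
qed

lemma ascend_commute:
  assumes "2 \<le> k" "k \<le> N" "2 \<le> i" "j \<le> N" "k + 2 \<le> i \<or> j + 2 \<le> k"
  shows "commutes (s k) (ascend i j)"
  using arg_cong[OF descend_commute[OF assms], of rho]
  by (simp add: rho_add rho_descend rho_s)

lemma ascend_shift:
  assumes "2 \<le> i" "i \<le> k" "k + 1 \<le> j" "j \<le> N"
  shows "s (k + 1) + ascend i j = ascend i j + s k"
  using arg_cong[OF descend_shift[OF assms], of rho]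
  by (simp add: rho_add rho_descend rho_s)

lemma t_ascend_commute:
  assumes "2 \<le> i" "j \<le> N" "3 < i \<or> j < 3"
  shows "commutes t (ascend i j)"
  using arg_cong[OF t_descend_commute[OF assms], of rho]
  by (simp add: rho_add rho_descend rho_t)

lemma t_commute_s2: "commutes t (s 2)"
  using N4 by (intro t_commute) auto

lemma s2_braid_s3: "braids (s 2) (s 3)"
  using s_braid[of 2] N4 by simp

lemma t_commute_descend4: "j \<le> N \<Longrightarrow> commutes t (descend j 4)"
  by (intro t_descend_commute) auto

lemma descend_4_3: "3 \<le> j \<Longrightarrow> descend j 4 + s 3 = descend j 3"
  using descend_low[of 3 j] by simp

lemma descend_3_2: "2 \<le> j \<Longrightarrow> descend j 3 + s 2 = descend j 2"
  using descend_low[of 2 j] by (simp add: numeral_3_eq_3)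

lemma palin_descend_mem:
  assumes "2 \<le> i" "j \<le> N"
  shows "palin (descend j i) \<in> PB"
proof (cases "i \<le> j")
  case True
  then show ?thesis using assms by (intro gen_subgroup.generator) (auto simp: pure_generators_def)
next
  case False
  then show ?thesis by (simp add: descend_empty palin_zero gen_subgroup.zero)
qed

lemma palin_descend_t_mem: "2 \<le> j \<Longrightarrow> j \<le> N \<Longrightarrow> palin (descend j 3 + t) \<in> PB"
  by (intro gen_subgroup.generator) (auto simp: pure_generators_def)

lemma s_double_mem: "2 \<le> k \<Longrightarrow> k \<le> N \<Longrightarrow> s k + s k \<in> PB"
  using palin_descend_mem[of k k] by (simp add: descend_self palin_fixed rho_s)

lemma t_double_mem: "t + t \<in> PB"
  using palin_descend_t_mem[of 2] N4 by (simp add: descend_empty palin_fixed rho_t)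

lemma b_half_2: "b_half j 2 = descend j 3 + s 2 + t"
  by (simp add: b_half_def ascend_empty)

lemma b_half_3: "b_half j 3 = descend j 3 + s 2 + t + s 3"
  by (simp add: b_half_def ascend_def)

lemma palin_b_half_2:
  assumes "2 \<le> j"
  shows "palin (b_half j 2) = (palin (descend j 3 + t) - palin (descend j 3)) + palin (descend j 2)"
proof -
  have "palin (b_half j 2) = ((descend j 3 + s 2) + (t + t) - (descend j 3 + s 2))
      + palin (descend j 3 + s 2)"
    by (simp only: b_half_2 palin_add palin_fixed[OF rho_t])
  also have "\<dots> = (descend j 3 + (s 2 + (t + t) - s 2) - descend j 3) + palin (descend j 3 + s 2)"
    by (simp only: group_normalize)
  also have "\<dots> = (descend j 3 + (t + t) - descend j 3) + palin (descend j 3 + s 2)"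
    by (simp only: conj_commuting_double[OF t_commute_s2])
  also have "\<dots> = (palin (descend j 3 + t) - palin (descend j 3)) + palin (descend j 3 + s 2)"
    by (simp only: conj_double_fixed[OF rho_t])
  also have "\<dots> = (palin (descend j 3 + t) - palin (descend j 3)) + palin (descend j 2)"
    by (simp only: descend_3_2[OF assms])
  finally show ?thesis .
qed

lemma palin_b_half_mem:
  assumes "2 \<le> i" "i \<le> j" "j \<le> N"
  shows "palin (b_half j i) \<in> PB"
proof (cases "i = 2")
  case True
  have "(palin (descend j 3 + t) - palin (descend j 3)) + palin (descend j 2) \<in> PB"
    using assms True
    by (intro gen_subgroup.add gen_subgroup_diff palin_descend_t_mem palin_descend_mem) auto
  then show ?thesis using palin_b_half_2[of j] assms True by simp
next
  case False
  then show ?thesis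
    using assms by (intro gen_subgroup.generator) (auto simp: pure_generators_def)
qed

lemma palin_s_descend_mem:
  assumes a: "2 \<le> i" "i \<le> j" "j \<le> N" "2 \<le> k" "k \<le> N"
  shows "palin (s k + descend j i) \<in> PB"
proof -
  have hk: "s k + s k \<in> PB" using a s_double_mem by simp
  consider "k + 2 \<le> i \<or> j + 2 \<le> k" | "i \<le> k \<and> k + 1 \<le> j" | "k = j" | "k = j + 1"
    | "k + 1 = i"
    by linarith
  then show ?thesis
  proof cases
    case 1
    then show ?thesis using a hk
      by (intro palin_commuting_mem[OF rho_s rho_s descend_commute palin_descend_mem]) auto
  next
    case 2
    then show ?thesis using a hk
      by (intro palin_commuting_mem[OF rho_s rho_s descend_shift palin_descend_mem]) auto
  next
    case 3
    have "descend j i = s j + descend (j - 1) i" using descend_Suc[of i "j - 1"] a by simp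
    then show ?thesis using 3 a hk
      by (simp only:) (intro palin_double_mem[OF rho_s palin_descend_mem], auto)
  next
    case 4
    have "s k + descend j i = descend (j + 1) i" using descend_Suc[of i j] a 4 by simp
    then show ?thesis using a 4 by (simp add: palin_descend_mem)
  next
    case 5
    have e1: "descend j i = descend j (i + 1) + s i" using descend_low[of i j] a by simp
    have e2: "descend j (i + 1) + s i + s k = descend j k" using descend_low[of k j] e1 a 5 by simp
    have br: "braids (s k) (s i)" using s_braid[of k] a 5 by simp
    have cV: "commutes (s k) (descend j (i + 1))" using a 5 by (intro descend_commute) auto
    show ?thesis unfolding e1
      by (rule palin_braid_mem[OF rho_s rho_s br cV])
        (use a 5 hk e1[symmetric] e2 palin_descend_mem in auto)
  qed
qed

lemma palin_t_descend_mem: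
  assumes a: "2 \<le> i" "i \<le> j" "j \<le> N"
  shows "palin (t + descend j i) \<in> PB"
proof -
  consider "3 < i \<or> j < 3" | "i = 3" | "i = 2 \<and> 3 \<le> j" using a by linarith
  then show ?thesis
  proof cases
    case 1
    then show ?thesis using a t_double_mem
      by (intro palin_commuting_mem[OF rho_t rho_t t_descend_commute palin_descend_mem]) auto
  next
    case 2
    have e: "descend j i = descend j 4 + s 3" using descend_4_3[of j] a 2 by simp
    show ?thesis unfolding e
      by (rule palin_braid_mem[OF rho_t rho_s t_braid t_commute_descend4])
        (use a 2 t_double_mem palin_descend_mem palin_descend_t_mem descend_4_3 in auto)
  next
    case 3
    have e: "descend j i = descend j 4 + s 3 + s 2" using descend_4_3[of j] descend_3_2[of j] a 3
      by simp
    have h3: "palin (descend j 4 + s 3 + s 2 + t) \<in> PB"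
      using descend_4_3[of j] palin_b_half_mem[of 2 j] a 3 by (simp add: b_half_2)
    have h4: "palin (descend j 4 + s 3 + s 2 + t + s 3) \<in> PB"
      using descend_4_3[of j] palin_b_half_mem[of 3 j] a 3 by (simp add: b_half_3)
    show ?thesis unfolding e
      by (rule palin_A3_mem[OF rho_t rho_s rho_s t_braid s2_braid_s3 t_commute_s2[symmetric]
            t_commute_descend4 _ _ _ h3 h4 t_double_mem])
        (use a 3 palin_descend_mem palin_descend_t_mem descend_4_3 in auto)
  qed
qed

lemma palin_t_descend_t_mem:
  assumes a: "2 \<le> j" "j \<le> N"
  shows "palin (t + (descend j 3 + t)) \<in> PB"
proof (cases "j = 2")
  case True
  then have "t + (descend j 3 + t) = (descend j 3 + t) + t" by (simp add: descend_empty)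
  then show ?thesis
    by (rule palin_commuting_mem[OF rho_t rho_t _ palin_descend_t_mem t_double_mem]) (use a in auto)
next
  case False
  have e: "descend j 3 + t = descend j 4 + s 3 + t" using descend_4_3[of j] a False by simp
  have "t + (descend j 4 + s 3 + t) = (t + descend j 4) + (s 3 + t)" by (simp only: add.assoc)
  also have "\<dots> = descend j 4 + (t + s 3 + t)"
    by (simp only: t_commute_descend4[OF a(2)] add.assoc)
  also have "\<dots> = descend j 4 + (s 3 + t + s 3)" by (simp only: t_braid)
  also have "\<dots> = (descend j 4 + s 3 + t) + s 3" by (simp only: add.assoc)
  finally have c: "t + (descend j 4 + s 3 + t) = (descend j 4 + s 3 + t) + s 3" .
  show ?thesis unfolding e
    by (rule palin_commuting_mem[OF rho_t rho_s c _ t_double_mem])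
      (use a e[symmetric] palin_descend_t_mem in auto)
qed

lemma palin_s_descend_t_mem:
  assumes a: "2 \<le> j" "j \<le> N" "2 \<le> k" "k \<le> N"
  shows "palin (s k + (descend j 3 + t)) \<in> PB"
proof -
  have hk: "s k + s k \<in> PB" using a s_double_mem by simp
  consider "k = 2 \<and> j = 2" | "k = 2 \<and> 3 \<le> j" | "3 \<le> k \<and> k + 1 \<le> j" | "3 \<le> k \<and> k = j"
    | "k = j + 1" | "j + 2 \<le> k"
    using a by linarith
  then show ?thesis
  proof cases
    case 1
    then have "s k + (descend j 3 + t) = (descend j 3 + t) + s k"
      using t_commute_s2 by (simp add: descend_empty)
    then show ?thesis
      by (rule palin_commuting_mem[OF rho_s rho_s _ palin_descend_t_mem hk]) (use a in auto)
  next
    case 2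
    have e: "descend j 3 + t = descend j 4 + s 3 + t" using descend_4_3[of j] 2 by simp
    have xV: "commutes (s 2) (descend j 4)" using a by (intro descend_commute) auto
    have h2: "palin (descend j 4 + s 3 + s 2) \<in> PB"
      using descend_4_3[of j] descend_3_2[of j] palin_descend_mem[of 2 j] a 2 by simp
    have tt: "descend j 4 + s 3 + t + s 2 = descend j 3 + s 2 + t"
      using descend_4_3[of j] 2 by (simp add: add.assoc t_commute_s2)
    have h3: "palin (descend j 4 + s 3 + t + s 2) \<in> PB"
      using tt palin_b_half_mem[of 2 j] a by (simp add: b_half_2)
    have h4: "palin (descend j 4 + s 3 + t + s 2 + s 3) \<in> PB"
      using tt palin_b_half_mem[of 3 j] a 2 by (simp add: b_half_3)
    show ?thesis unfolding e 2[THEN conjunct1]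
      by (rule palin_A3_mem[OF rho_s rho_t rho_s s2_braid_s3 t_braid t_commute_s2 xV _ _ h2 h3 h4])
        (use a 2 palin_descend_mem palin_descend_t_mem s_double_mem descend_4_3 in auto)
  next
    case 3
    have "s k + descend j 3 = descend j 3 + s (k + 1)" using a 3 by (intro descend_shift) auto
    moreover have "s (k + 1) + t = t + s (k + 1)" using a 3 t_commute[of "k + 1"] by auto
    ultimately show ?thesis
      by (intro palin_commuting_mem[OF rho_s rho_s commute_through_add palin_descend_t_mem hk])
        (use a in auto)
  next
    case 4
    have e: "descend j 3 + t = s j + (descend (j - 1) 3 + t)"
      using descend_Suc[of 3 "j - 1"] 4 by (simp add: add.assoc)
    have "palin (s j + (s j + (descend (j - 1) 3 + t))) \<in> PB"
      by (intro palin_double_mem[OF rho_s palin_descend_t_mem]) (use 4 a s_double_mem in auto)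
    then show ?thesis using e 4 by simp
  next
    case 5
    have "s k + (descend j 3 + t) = descend (j + 1) 3 + t"
      using descend_Suc[of 3 j] 5 a by (simp add: add.assoc)
    then show ?thesis using 5 a by (simp add: palin_descend_t_mem)
  next
    case 6
    have "commutes (s k) (descend j 3)" using a 6 by (intro descend_commute) auto
    moreover have "s k + t = t + s k" using a 6 t_commute[of k] by auto
    ultimately show ?thesis
      by (intro palin_commuting_mem[OF rho_s rho_s commute_through_add palin_descend_t_mem hk])
        (use a in auto)
  qed
qed

lemma b_half_slide:
  assumes "x + descend j 3 = descend j 3 + y" "commutes y (s 2)" "commutes y t"
    "y + ascend 3 i = ascend 3 i + z"
  shows "x + b_half j i = b_half j i + z"
  unfolding b_half_def
  by (rule commute_through_add[OF commute_through_add[OF commute_through_add[OF assms(1,2)]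
        assms(3)] assms(4)])

lemma b_half_eq: "3 \<le> i \<Longrightarrow> 3 \<le> j \<Longrightarrow> b_half j i = descend j 4 + (s 3 + s 2 + t + s 3) + ascend 4 i"
  unfolding b_half_def using descend_4_3[of j, symmetric] ascend_low[of 3 i]
  by (simp add: add.assoc)

lemma b_half_Suc: "2 \<le> m \<Longrightarrow> s (Suc m) + b_half m i = b_half (Suc m) i"
  unfolding b_half_def using descend_Suc[of 3 m] by (simp add: add.assoc)

lemma b_half_diag_Suc: "2 \<le> m \<Longrightarrow> b_half (Suc m) (Suc m) = s (Suc m) + b_half m m + s (Suc m)"
  unfolding b_half_def using descend_Suc[of 3 m] ascend_Suc[of 3 m] by (simp add: add.assoc)

lemma rho_b_half_diag: "rho (b_half m m) = b_half m m"
proof -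
  have "rho (b_half m m) = descend m 3 + (t + s 2) + ascend 3 m"
    by (simp only: b_half_def rho_add rho_descend rho_ascend rho_s rho_t add.assoc)
  also have "\<dots> = b_half m m" by (simp only: t_commute_s2 b_half_def add.assoc)
  finally show ?thesis .
qed

lemma s_commute_b_half:
  assumes "2 \<le> j" "j + 2 \<le> k" "k \<le> N" "i \<le> j"
  shows "commutes (s k) (b_half j i)"
proof (rule b_half_slide)
  show "s k + descend j 3 = descend j 3 + s k" using assms by (intro descend_commute) auto
  show "commutes (s k) (s 2)" using assms by (intro s_commute_sym) auto
  show "commutes (s k) t" using assms t_commute[of k] by auto
  show "s k + ascend 3 i = ascend 3 i + s k" using assms by (intro ascend_commute) auto
qed

lemma s_shift_b_half:
  assumes "3 \<le> k" "k + 1 \<le> j" "j \<le> N" "i + 1 \<le> k"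
  shows "s k + b_half j i = b_half j i + s (k + 1)"
proof (rule b_half_slide)
  show "s k + descend j 3 = descend j 3 + s (k + 1)" using assms by (intro descend_shift) auto
  show "commutes (s (k + 1)) (s 2)" using assms by (intro s_commute_sym) auto
  show "commutes (s (k + 1)) t" using assms t_commute[of "k + 1"] by auto
  show "commutes (s (k + 1)) (ascend 3 i)" using assms by (intro ascend_commute) auto
qed

lemma s_commute_b_half_low:
  assumes "3 \<le> k" "k + 1 \<le> i" "i \<le> j" "j \<le> N"
  shows "commutes (s k) (b_half j i)"
proof (rule b_half_slide)
  show "s k + descend j 3 = descend j 3 + s (k + 1)" using assms by (intro descend_shift) auto
  show "commutes (s (k + 1)) (s 2)" using assms by (intro s_commute_sym) auto
  show "commutes (s (k + 1)) t" using assms t_commute[of "k + 1"] by auto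
  show "s (k + 1) + ascend 3 i = ascend 3 i + s k" using assms by (intro ascend_shift) auto
qed

lemma palin_t_b_half_mem:
  assumes a: "3 \<le> i" "i \<le> j" "j \<le> N"
  shows "palin (t + b_half j i) \<in> PB"
proof -
  have K: "t + s 3 + s 2 + t + s 3 = s 3 + s 2 + t + s 3 + s 2"
    by (rule A3_word_swap[OF s2_braid_s3 t_braid t_commute_s2[symmetric]])
  have aU: "commutes (s 2) (ascend 4 i)" using a by (intro ascend_commute) auto
  have "t + b_half j i = (t + descend j 4) + (s 3 + s 2 + t + s 3) + ascend 4 i"
    using a by (simp only: b_half_eq add.assoc)
  also have "\<dots> = descend j 4 + (t + s 3 + s 2 + t + s 3) + ascend 4 i"
    using a by (simp only: t_commute_descend4 add.assoc)
  also have "\<dots> = descend j 4 + (s 3 + s 2 + t + s 3 + s 2) + ascend 4 i" by (simp only: K)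
  also have "\<dots> = descend j 4 + (s 3 + s 2 + t + s 3) + (s 2 + ascend 4 i)"
    by (simp only: add.assoc)
  also have "\<dots> = b_half j i + s 2" using a by (simp only: aU b_half_eq add.assoc)
  finally have "t + b_half j i = b_half j i + s 2" .
  then show ?thesis
    by (rule palin_commuting_mem[OF rho_t rho_s _ palin_b_half_mem t_double_mem]) (use a in auto)
qed

lemma palin_s2_b_half_mem:
  assumes a: "3 \<le> i" "i \<le> j" "j \<le> N"
  shows "palin (s 2 + b_half j i) \<in> PB"
proof -
  have K: "s 2 + s 3 + t + s 2 + s 3 = s 3 + t + s 2 + s 3 + t"
    by (rule A3_word_swap[OF t_braid s2_braid_s3 t_commute_s2])
  have cU: "commutes t (ascend 4 i)" using a by (intro t_ascend_commute) auto
  have cV: "commutes (s 2) (descend j 4)" using a by (intro descend_commute) auto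
  have "s 2 + b_half j i = (s 2 + descend j 4) + (s 3 + (s 2 + t) + s 3) + ascend 4 i"
    using a by (simp only: b_half_eq add.assoc)
  also have "\<dots> = descend j 4 + (s 2 + s 3 + t + s 2 + s 3) + ascend 4 i"
    by (simp only: cV t_commute_s2 add.assoc)
  also have "\<dots> = descend j 4 + (s 3 + t + s 2 + s 3 + t) + ascend 4 i" by (simp only: K)
  also have "\<dots> = descend j 4 + (s 3 + (t + s 2) + s 3) + (t + ascend 4 i)"
    by (simp only: add.assoc)
  also have "\<dots> = b_half j i + t" using a by (simp only: cU t_commute_s2 b_half_eq add.assoc)
  finally have "s 2 + b_half j i = b_half j i + t" .
  then show ?thesis
    by (rule palin_commuting_mem[OF rho_s rho_t _ palin_b_half_mem]) (use a s_double_mem N4 in auto)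
qed

lemma four_braids_b_half:
  "2 \<le> m \<Longrightarrow> m + 1 \<le> N \<Longrightarrow> four_braids (b_half m m) (s (m + 1))"
proof (induction m rule: nat_induct_at_least)
  case base
  have "b_half 2 2 = s 2 + t" by (simp add: b_half_2 descend_empty)
  then show ?case using A3_four_braids[OF s2_braid_s3 t_braid t_commute_s2[symmetric]] by simp
next
  case (Suc m)
  have "commutes (b_half m m) (s (Suc (Suc m)))"
    using s_commute_b_half[of m "Suc (Suc m)" m] Suc by (simp add: add.commute)
  moreover have "braids (s (Suc m)) (s (Suc (Suc m)))" using s_braid[of "Suc m"] Suc by simp
  ultimately show ?case
    using four_braids_conj[of "b_half m m" "s (Suc m)" "s (Suc (Suc m))"] Suc
      b_half_diag_Suc[OF Suc.hyps]
    by (simp add: add.commute)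
qed

lemma palin_s_b_half_diag_mem:
  assumes m: "2 \<le> m" "m + 1 \<le> N"
  shows "palin (s (m + 1) + b_half (m + 1) (m + 1)) \<in> PB"
proof -
  define y where "y = b_half m m"
  define p where "p = s (m + 1)"
  have rp: "rho p = p" by (simp add: p_def rho_s)
  have ry: "rho y = y" unfolding y_def by (rule rho_b_half_diag)
  have e: "b_half (m + 1) (m + 1) = p + y + p" using b_half_diag_Suc[OF m(1)] by (simp add: y_def p_def)
  have hy: "palin y \<in> PB" using palin_b_half_mem[of m m] m by (simp add: y_def)
  have h1: "palin (p + y + p) \<in> PB" using palin_b_half_mem[of "m + 1" "m + 1"] m e by simp
  have h2: "palin (p + y) \<in> PB"
    using palin_b_half_mem[of m "m + 1"] m b_half_Suc[OF m(1), of m] by (simp add: y_def p_def)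
  have "y + (p + p) - y = (y + y) + (-y + (p + p) + y) - (y + y)" by (simp only: group_normalize)
  also have "-y + (p + p) + y = p + y + (p + p) - y - p"
    using four_braids_b_half[OF m] by (intro four_braids_conj_double) (simp add: y_def p_def)
  also have "\<dots> = (p + y) + (p + p) - (p + y)" by (simp only: group_normalize)
  finally have "y + (p + p) - y = (y + y) + ((p + y) + (p + p) - (p + y)) - (y + y)" .
  moreover have "palin (y + p) = y + (p + p) - y + palin y"
    by (simp only: palin_add palin_fixed[OF rp])
  moreover have yy: "y + y \<in> PB" using hy palin_fixed[OF ry] by simp
  moreover have pyp: "(p + y) + (p + p) - (p + y) \<in> PB" by (rule conj_double_fixed_mem[OF rp h1 h2])
  ultimately have "palin (y + p) \<in> PB"
    using hy by (simp only:) (intro yy pyp hy gen_subgroup.add gen_subgroup_conj)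
  moreover have "p + p \<in> PB" using s_double_mem[of "m + 1"] m by (simp add: p_def)
  ultimately have "palin (p + (p + (y + p))) \<in> PB" by (rule palin_double_mem[OF rp])
  then show ?thesis using e by (simp add: p_def add.assoc)
qed

lemma palin_s_b_half_mem:
  assumes a: "3 \<le> i" "i \<le> j" "j \<le> N" "2 \<le> k" "k \<le> N"
  shows "palin (s k + b_half j i) \<in> PB"
proof -
  have hk: "s k + s k \<in> PB" using a s_double_mem by simp
  consider "k = 2" | "j + 2 \<le> k" | "k = j + 1" | "3 \<le> k \<and> k + 1 \<le> j \<and> i + 1 \<le> k"
    | "3 \<le> k \<and> k + 1 \<le> i" | "k = i \<and> k + 1 \<le> j" | "k = j \<and> i < j" | "k = j \<and> i = j"
    using a by linarith
  then show ?thesis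
  proof cases
    case 1
    then show ?thesis using a palin_s2_b_half_mem by simp
  next
    case 2
    then have "commutes (s k) (b_half j i)" using a by (intro s_commute_b_half) auto
    then show ?thesis
      by (rule palin_commuting_mem[OF rho_s rho_s _ palin_b_half_mem hk]) (use a in auto)
  next
    case 3
    then have "s k + b_half j i = b_half (Suc j) i" using b_half_Suc[of j i] a by simp
    then show ?thesis using a 3 palin_b_half_mem[of i "Suc j"] by simp
  next
    case 4
    then have "s k + b_half j i = b_half j i + s (k + 1)" using a by (intro s_shift_b_half) auto
    then show ?thesis
      by (rule palin_commuting_mem[OF rho_s rho_s _ palin_b_half_mem hk]) (use a in auto)
  next
    case 5
    then have "commutes (s k) (b_half j i)" using a by (intro s_commute_b_half_low) auto
    then show ?thesis
      by (rule palin_commuting_mem[OF rho_s rho_s _ palin_b_half_mem hk]) (use a in auto)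
  next
    case 6
    define W where "W = b_half j (k - 1)"
    have eW: "b_half j i = W + s k" using 6 a ascend_Suc[of 3 "k - 1"]
      by (simp add: W_def b_half_def add.assoc)
    have eW2: "W + s k + s (k + 1) = b_half j (k + 1)"
      using 6 a ascend_Suc[of 3 "k - 1"] ascend_Suc[of 3 k] by (simp add: W_def b_half_def add.assoc)
    have c: "s k + W = W + s (k + 1)" unfolding W_def using a 6 by (intro s_shift_b_half) auto
    have br: "braids (s (k + 1)) (s k)" using s_braid[of k] a 6 by simp
    have h0: "palin W \<in> PB" unfolding W_def using a 6 by (intro palin_b_half_mem) auto
    have h1: "palin (W + s k) \<in> PB" using palin_b_half_mem[of i j] a eW by simp
    have h2: "palin (W + s k + s (k + 1)) \<in> PB" using palin_b_half_mem[of "k + 1" j] a 6 eW2 by simp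
    show ?thesis unfolding eW by (rule palin_braid_shift_mem[OF rho_s rho_s br c h0 h1 h2 hk])
  next
    case 7
    have j2: "2 \<le> j - 1" using a 7 by linarith
    have e: "b_half j i = s j + b_half (j - 1) i" using b_half_Suc[OF j2, of i] j2 by simp
    have "palin (s j + (s j + b_half (j - 1) i)) \<in> PB"
      by (intro palin_double_mem[OF rho_s palin_b_half_mem]) (use a 7 s_double_mem in auto)
    then show ?thesis using e 7 by simp
  next
    case 8
    have "palin (s (j - 1 + 1) + b_half (j - 1 + 1) (j - 1 + 1)) \<in> PB"
      using a 8 by (intro palin_s_b_half_diag_mem) auto
    then show ?thesis using a 8 by simp
  qed
qed

definition letters :: "'g set" where
  "letters = {s k | k. 2 \<le> k \<and> k \<le> N} \<union> {t}"

lemma rho_letter: "x \<in> letters \<Longrightarrow> rho x = x"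
  by (auto simp: letters_def rho_s rho_t)

lemma letter_double_mem: "x \<in> letters \<Longrightarrow> x + x \<in> PB"
  by (auto simp: letters_def s_double_mem t_double_mem)

lemma letter_conj_generator_mem:
  assumes x: "x \<in> letters" and g: "g \<in> pure_generators"
  shows "x + g - x \<in> PB"
proof -
  obtain g' where g': "g = palin g'"
    and "(\<exists>i j. g' = descend j i \<and> 2 \<le> i \<and> i \<le> j \<and> j \<le> N)
      \<or> (\<exists>j. g' = descend j 3 + t \<and> 2 \<le> j \<and> j \<le> N)
      \<or> (\<exists>i j. g' = b_half j i \<and> 3 \<le> i \<and> i \<le> j \<and> j \<le> N)"
    using g unfolding pure_generators_def by blast
  then have "palin (x + g') \<in> PB"
    using x palin_s_descend_mem palin_t_descend_mem palin_s_descend_t_mem palin_t_descend_t_mem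
      palin_s_b_half_mem palin_t_b_half_mem
    unfolding letters_def by blast
  then show ?thesis
    using g' conj_mem_of_palin_mem[OF rho_letter[OF x] letter_double_mem[OF x]] by simp
qed

lemma letter_conj_mem: "x \<in> letters \<Longrightarrow> h \<in> PB \<Longrightarrow> x + h - x \<in> PB"
  by (rule gen_subgroup_conj_closed[OF letter_conj_generator_mem])

lemma letter_inverse_conj_mem: "x \<in> letters \<Longrightarrow> h \<in> PB \<Longrightarrow> - x + h + x \<in> PB"
  by (intro gen_subgroup_conj_inverse letter_double_mem letter_conj_mem)

end

section \<open>Braid groups of type D as a quotient type\<close>

lemma valid_word_append [simp]: "valid_word n (x @ y) \<longleftrightarrow> valid_word n x \<and> valid_word n y"
  by (auto simp: valid_word_def)

lemma inv_word_Nil [simp]: "inv_word [] = []"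
  by (simp add: inv_word_def)

lemma inv_word_Cons: "inv_word ((g, e) # x) = inv_word x @ [(g, \<not> e)]"
  by (simp add: inv_word_def)

lemma inv_word_append: "inv_word (x @ y) = inv_word y @ inv_word x"
  by (simp add: inv_word_def)

lemma inv_word_inv_word [simp]: "inv_word (inv_word x) = x"
  by (simp add: inv_word_def rev_map o_def case_prod_beta)

lemma inv_word_concat: "inv_word (concat ws) = concat (map inv_word (rev ws))"
  by (induction ws) (simp_all add: inv_word_append)

lemma valid_word_inv_word [simp]: "valid_word n (inv_word x) \<longleftrightarrow> valid_word n x"
  by (auto simp: valid_word_def inv_word_def)

lemma adj_sym: "adj n g h \<longleftrightarrow> adj n h g"
  by (auto simp: adj_def insert_commute)

lemma adj_valid_gen: "adj n g h \<Longrightarrow> valid_gen n g \<and> valid_gen n h"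
  by (auto simp: adj_def valid_gen_def doubleton_eq_iff)

lemma drel_rev: "drel c n u v \<Longrightarrow> drel c n (rev u) (rev v)"
proof (induction rule: drel.induct)
  case (refl w)
  then show ?case by (rule drel.refl)
next
  case (sym u v)
  from sym.IH show ?case by (rule drel.sym)
next
  case (trans u v w)
  then show ?case by (blast intro: drel.trans)
next
  case (ctxt u v p q)
  then show ?case using drel.ctxt[OF ctxt.IH, of "rev q" "rev p"] by simp
next
  case (free g b)
  then show ?case using drel.free[of n g c "\<not> b"] by simp
next
  case (comm g h)
  then show ?case using drel.comm[of n h g c] by (simp add: adj_sym)
next
  case (braid g h)
  then show ?case using drel.braid[of n g h c] by simp
next
  case (invol g)
  then show ?case using drel.invol[of c n g] by simp
qed

lemma drel_append: "drel c n u u' \<Longrightarrow> drel c n v v' \<Longrightarrow> drel c n (u @ v) (u' @ v')"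
  using drel.ctxt[of c n u u' "[]" v] drel.ctxt[of c n v v' u' "[]"] by (auto intro: drel.trans)

lemma drel_cancel_inv_word: "valid_word n x \<Longrightarrow> drel c n (x @ inv_word x) []"
proof (induction x)
  case Nil
  then show ?case by (simp add: drel.refl)
next
  case (Cons a x)
  obtain g e where a: "a = (g, e)" by (cases a)
  have g: "valid_gen n g" and x: "valid_word n x"
    using Cons.prems a by (simp_all add: valid_word_def)
  have "drel c n ([a] @ (x @ inv_word x) @ [(g, \<not> e)]) ([a] @ [] @ [(g, \<not> e)])"
    by (rule drel.ctxt[OF Cons.IH[OF x]])
  moreover have "drel c n [(g, e), (g, \<not> e)] []" by (rule drel.free[OF g])
  ultimately show ?case using a by (auto simp: inv_word_Cons intro: drel.trans)
qed

lemma drel_cancel_inv_word': "valid_word n x \<Longrightarrow> drel c n (inv_word x @ x) []"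
  using drel_cancel_inv_word[of n "inv_word x" c] by simp

lemma drel_inv_word:
  assumes vx: "valid_word n x" and vy: "valid_word n y" and xy: "drel c n x y"
  shows "drel c n (inv_word x) (inv_word y)"
proof -
  have "drel c n (inv_word x @ []) (inv_word x @ (y @ inv_word y))"
    by (rule drel_append[OF drel.refl drel.sym[OF drel_cancel_inv_word[OF vy]]])
  moreover have "drel c n (inv_word x @ (y @ inv_word y)) (inv_word x @ (x @ inv_word y))"
    by (rule drel_append[OF drel.refl drel_append[OF drel.sym[OF xy] drel.refl]])
  moreover have "drel c n ((inv_word x @ x) @ inv_word y) ([] @ inv_word y)"
    by (rule drel_append[OF drel_cancel_inv_word'[OF vx] drel.refl])
  ultimately show ?thesis by (auto intro: drel.trans)
qed

definition valid_part :: "nat \<Rightarrow> dword \<Rightarrow> dword" where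
  "valid_part m w = filter (\<lambda>x. valid_gen m (fst x)) w"

lemma valid_part_append [simp]: "valid_part m (u @ v) = valid_part m u @ valid_part m v"
  by (simp add: valid_part_def)

lemma valid_part_rev: "valid_part m (rev u) = rev (valid_part m u)"
  by (simp add: valid_part_def rev_filter)

lemma valid_part_inv_word: "valid_part m (inv_word u) = inv_word (valid_part m u)"
  by (induction u) (auto simp: valid_part_def inv_word_def)

lemma valid_word_valid_part: "valid_word m (valid_part m u)"
  by (auto simp: valid_part_def valid_word_def)

lemma valid_part_id: "valid_word m u \<Longrightarrow> valid_part m u = u"
  by (auto simp: valid_part_def valid_word_def)

lemma valid_part_idem: "valid_part m (valid_part m u) = valid_part m u"
  by (simp add: valid_part_def)

lemma valid_part_Nil [simp]: "valid_part m [] = []"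
  by (simp add: valid_part_def)

text \<open>To obtain \<open>Br(D\<^sub>m)\<close> for all ranks \<open>m\<close> as one type, an element is a family of words,
  one for each \<open>m\<close>, and two families are identified if they agree in every \<open>Br(D\<^sub>m)\<close> once
  the letters not belonging to rank \<open>m\<close> (which have no inverses there) are deleted.\<close>

definition fam_eq :: "(nat \<Rightarrow> dword) \<Rightarrow> (nat \<Rightarrow> dword) \<Rightarrow> bool" where
  "fam_eq f g \<longleftrightarrow> (\<forall>m. br_eq m (valid_part m (f m)) (valid_part m (g m)))"

lemma equivp_fam_eq: "equivp fam_eq"
proof (rule equivpI)
  show "reflp fam_eq" by (auto simp: reflp_def fam_eq_def intro: drel.refl)
  show "symp fam_eq" by (auto simp: symp_def fam_eq_def intro: drel.sym)
  show "transp fam_eq" by (auto simp: transp_def fam_eq_def intro: drel.trans)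
qed

quotient_type braid_fam = "nat \<Rightarrow> dword" / fam_eq
  by (rule equivp_fam_eq)

instantiation braid_fam :: group_add
begin

lift_definition zero_braid_fam :: braid_fam is "\<lambda>m. []" .

lift_definition plus_braid_fam :: "braid_fam \<Rightarrow> braid_fam \<Rightarrow> braid_fam" is "\<lambda>f g m. f m @ g m"
  by (auto simp: fam_eq_def intro: drel_append)

lift_definition uminus_braid_fam :: "braid_fam \<Rightarrow> braid_fam" is "\<lambda>f m. inv_word (f m)"
  by (auto simp: fam_eq_def valid_part_inv_word intro: drel_inv_word valid_word_valid_part)

lift_definition minus_braid_fam :: "braid_fam \<Rightarrow> braid_fam \<Rightarrow> braid_fam"
  is "\<lambda>f g m. f m @ inv_word (g m)"
  by (auto simp: fam_eq_def valid_part_inv_word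
      intro!: drel_append drel_inv_word valid_word_valid_part)

instance
proof
  fix a b c :: braid_fam
  show "a + b + c = a + (b + c)" by transfer (auto simp: fam_eq_def intro: drel.refl)
  show "0 + a = a" by transfer (auto simp: fam_eq_def intro: drel.refl)
  show "a + 0 = a" by transfer (auto simp: fam_eq_def intro: drel.refl)
  show "- a + a = 0"
    by transfer (auto simp: fam_eq_def valid_part_inv_word
        intro: drel_cancel_inv_word' valid_word_valid_part)
  show "a + - b = a - b" by transfer (auto simp: fam_eq_def intro: drel.refl)
qed

end

lift_definition word_class :: "nat \<Rightarrow> dword \<Rightarrow> braid_fam" is "\<lambda>n w m. if m = n then w else []" .

lift_definition rev_fam :: "braid_fam \<Rightarrow> braid_fam" is "\<lambda>f m. rev (f m)"
  by (auto simp: fam_eq_def valid_part_rev intro: drel_rev)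

lemma word_class_append: "word_class n (u @ v) = word_class n u + word_class n v"
  by transfer (auto simp: fam_eq_def intro: drel.refl)

lemma word_class_Nil: "word_class n [] = 0"
  by transfer (auto simp: fam_eq_def intro: drel.refl)

lemma word_class_inv_word: "word_class n (inv_word u) = - word_class n u"
  by transfer (auto simp: fam_eq_def intro: drel.refl)

lemma word_class_eq_iff: "word_class n u = word_class n v \<longleftrightarrow> br_eq n (valid_part n u) (valid_part n v)"
  by transfer (auto simp: fam_eq_def intro: drel.refl)

lemma word_class_valid_part: "word_class n (valid_part n u) = word_class n u"
  by (simp add: word_class_eq_iff valid_part_idem drel.refl)

lemma word_class_eqI: "valid_word n u \<Longrightarrow> valid_word n v \<Longrightarrow> br_eq n u v \<Longrightarrow> word_class n u = word_class n v"
  by (simp add: word_class_eq_iff valid_part_id)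

lemma rev_fam_add: "rev_fam (a + b) = rev_fam b + rev_fam a"
  by transfer (auto simp: fam_eq_def intro: drel.refl)

lemma rev_fam_word_class: "rev_fam (word_class n w) = word_class n (rev w)"
  by transfer (auto simp: fam_eq_def intro: drel.refl)

definition gen_y :: "nat \<Rightarrow> nat \<Rightarrow> braid_fam" where
  "gen_y n k = word_class n [(Y k, False)]"

definition gen_y2' :: "nat \<Rightarrow> braid_fam" where
  "gen_y2' n = word_class n [(Y2', False)]"

lemma word_class_two: "word_class n [a] + word_class n [b] = word_class n [a, b]"
  using word_class_append[of n "[a]" "[b]"] by simp

lemma word_class_three:
  "word_class n [a] + word_class n [b] + word_class n [c] = word_class n [a, b, c]"
  using word_class_append[of n "[a]" "[b]"] word_class_append[of n "[a, b]" "[c]"] by simp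

lemma Dn_braid_word_class: "4 \<le> n \<Longrightarrow> Dn_braid rev_fam n (gen_y n) (gen_y2' n)"
proof (unfold_locales)
  assume n: "4 \<le> n"
  then show "4 \<le> n" .
  fix k l :: nat and x y :: braid_fam
  show "gen_y n k + gen_y n l = gen_y n l + gen_y n k" if "2 \<le> k" "l \<le> n" "k + 2 \<le> l"
  proof -
    have "\<not> adj n (Y k) (Y l)" using that by (auto simp: adj_def doubleton_eq_iff)
    then have "br_eq n [(Y k, False), (Y l, False)] [(Y l, False), (Y k, False)]"
      using that by (intro drel.comm) (auto simp: valid_gen_def)
    then show ?thesis unfolding gen_y_def word_class_two
      using that by (intro word_class_eqI) (auto simp: valid_word_def valid_gen_def)
  qed
  show "braids (gen_y n k) (gen_y n (k + 1))" if "2 \<le> k" "k + 1 \<le> n"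
  proof -
    have "adj n (Y k) (Y (k + 1))"
    proof (cases "k = 2")
      case True
      then show ?thesis using that by (auto simp: adj_def)
    next
      case False
      then show ?thesis unfolding adj_def using that by (intro conjI disjI2 exI[of _ k]) auto
    qed
    then have "br_eq n [(Y k, False), (Y (k + 1), False), (Y k, False)]
        [(Y (k + 1), False), (Y k, False), (Y (k + 1), False)]"
      by (rule drel.braid)
    then show ?thesis unfolding gen_y_def word_class_three
      using that by (intro word_class_eqI) (auto simp: valid_word_def valid_gen_def)
  qed
  show "gen_y2' n + gen_y n k = gen_y n k + gen_y2' n" if "2 \<le> k" "k \<le> n" "k \<noteq> 3"
  proof -
    have "\<not> adj n Y2' (Y k)" using that by (auto simp: adj_def doubleton_eq_iff)
    then have "br_eq n [(Y2', False), (Y k, False)] [(Y k, False), (Y2', False)]"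
      using that by (intro drel.comm) (auto simp: valid_gen_def)
    then show ?thesis unfolding gen_y_def gen_y2'_def word_class_two
      using that by (intro word_class_eqI) (auto simp: valid_word_def valid_gen_def)
  qed
  show "braids (gen_y2' n) (gen_y n 3)"
  proof -
    have "adj n Y2' (Y 3)" using n by (auto simp: adj_def)
    then have "br_eq n [(Y2', False), (Y 3, False), (Y2', False)]
        [(Y 3, False), (Y2', False), (Y 3, False)]"
      by (rule drel.braid)
    then show ?thesis unfolding gen_y_def gen_y2'_def word_class_three
      using n by (intro word_class_eqI) (auto simp: valid_word_def valid_gen_def)
  qed
  show "rev_fam (x + y) = rev_fam y + rev_fam x" by (rule rev_fam_add)
  show "rev_fam (gen_y n k) = gen_y n k" by (simp add: gen_y_def rev_fam_word_class)
  show "rev_fam (gen_y2' n) = gen_y2' n" by (simp add: gen_y2'_def rev_fam_word_class)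
qed

section \<open>The pure braid group\<close>

lemma sum_list_gen_y: "sum_list (map (gen_y n) ks) = word_class n (map (\<lambda>k. (Y k, False)) ks)"
proof (induction ks)
  case (Cons k ks)
  have "word_class n (map (\<lambda>k. (Y k, False)) (k # ks))
      = word_class n ([(Y k, False)] @ map (\<lambda>k. (Y k, False)) ks)"
    by simp
  also have "\<dots> = gen_y n k + word_class n (map (\<lambda>k. (Y k, False)) ks)"
    by (simp only: word_class_append gen_y_def)
  finally show ?case using Cons by simp
qed (simp add: word_class_Nil)

lemma positive_palindrome_weyl_trivial:
  "\<forall>x\<in>set u. snd x = False \<Longrightarrow> valid_word n u \<Longrightarrow> weyl_eq n (u @ rev u) []"
proof (induction u)
  case Nil
  then show ?case by (simp add: drel.refl)
next
  case (Cons a u)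
  obtain g where a: "a = (g, False)" using Cons.prems by (cases a) auto
  have g: "valid_gen n g" using Cons.prems a by (simp add: valid_word_def)
  have "weyl_eq n ([a] @ (u @ rev u) @ [a]) ([a] @ [] @ [a])"
    by (rule drel.ctxt) (use Cons in \<open>auto simp: valid_word_def\<close>)
  moreover have "weyl_eq n [(g, False), (g, False)] []" by (rule drel.invol[OF _ g]) simp
  ultimately show ?case using a by (auto intro: drel.trans)
qed

lemma pure_gens_positive_palindrome:
  assumes "4 \<le> n" "g \<in> pure_gens n"
  shows "\<exists>u. g = u @ rev u \<and> valid_word n u \<and> (\<forall>x\<in>set u. snd x = False)"
  using assms(2) unfolding pure_gens_def
proof (elim UnE CollectE exE conjE)
  fix i j assume "g = a_gen j i" "2 \<le> i" "i \<le> j" "j \<le> n"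
  then show ?thesis
    by (intro exI[of _ "down j i"])
      (auto simp: a_gen_def down_def up_def valid_word_def valid_gen_def)
next
  assume "g \<in> {[(Y2', False), (Y2', False)]}"
  then show ?thesis
    by (intro exI[of _ "[(Y2', False)]"]) (auto simp: valid_word_def valid_gen_def)
next
  fix j assume "g = a2'_gen j" "3 \<le> j" "j \<le> n"
  then show ?thesis
    by (intro exI[of _ "down j 3 @ [(Y2', False)]"])
      (auto simp: a2'_gen_def down_def up_def valid_word_def valid_gen_def)
next
  fix i j assume "g = b_gen j i" "3 \<le> i" "i \<le> j" "j \<le> n"
  then show ?thesis using assms(1)
    by (intro exI[of _ "down j 3 @ [(Y 2, False), (Y2', False)] @ up 3 i"])
      (auto simp: b_gen_def down_def up_def valid_word_def valid_gen_def)
qed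

lemma valid_word_pure_gens: "4 \<le> n \<Longrightarrow> g \<in> pure_gens n \<Longrightarrow> valid_word n g"
  using pure_gens_positive_palindrome[of n g] by (auto simp: valid_word_def)

context
  fixes n :: nat
  assumes n: "4 \<le> n"
begin

interpretation Br: Dn_braid rev_fam n "gen_y n" "gen_y2' n"
  by (rule Dn_braid_word_class[OF n])

lemma pure_generator_word_class:
  assumes "g \<in> Br.pure_generators"
  shows "\<exists>w \<in> pure_gens n. g = word_class n w"
proof -
  have descend: "Br.descend j i = word_class n (down j i)" for j i
    by (simp add: Br.descend_def down_def up_def sum_list_gen_y rev_map)
  have ascend: "Br.ascend i j = word_class n (up i j)" for i j
    by (simp add: Br.ascend_def up_def sum_list_gen_y)
  have palin: "Br.palin (word_class n w) = word_class n (w @ rev w)" for w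
    by (simp add: Br.palin_def rev_fam_word_class word_class_append)
  from assms consider
      (a) j i where "g = Br.palin (Br.descend j i)" "2 \<le> i" "i \<le> j" "j \<le> n"
    | (a2') j where "g = Br.palin (Br.descend j 3 + gen_y2' n)" "2 \<le> j" "j \<le> n"
    | (b) j i where "g = Br.palin (Br.b_half j i)" "3 \<le> i" "i \<le> j" "j \<le> n"
    unfolding Br.pure_generators_def by blast
  then show ?thesis
  proof cases
    case (a j i)
    then have "g = word_class n (a_gen j i)"
      by (simp add: descend palin a_gen_def down_def)
    moreover have "a_gen j i \<in> pure_gens n" using a unfolding pure_gens_def by blast
    ultimately show ?thesis by blast
  next
    case (a2' j)
    then have g: "g = word_class n (down j 3 @ [(Y2', False), (Y2', False)] @ up 3 j)"
      by (simp add: descend gen_y2'_def palin down_def word_class_append[symmetric])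
    show ?thesis
    proof (cases "j = 2")
      case True
      then show ?thesis using g by (auto simp: down_def up_def pure_gens_def)
    next
      case False
      then have "a2'_gen j \<in> pure_gens n" using a2' unfolding pure_gens_def by auto
      then show ?thesis using g by (auto simp: a2'_gen_def)
    qed
  next
    case (b j i)
    have "Br.b_half j i = word_class n (down j 3 @ [(Y 2, False), (Y2', False)] @ up 3 i)"
      unfolding Br.b_half_def descend ascend unfolding gen_y_def gen_y2'_def
      by (simp add: word_class_append[symmetric])
    then have "g = word_class n (b_gen j i)"
      using b by (simp add: palin b_gen_def down_def)
    moreover have "b_gen j i \<in> pure_gens n" using b unfolding pure_gens_def by blast
    ultimately show ?thesis by blast
  qed
qed

lemma PB_word_class_concat:
  assumes "h \<in> Br.PB"
  shows "\<exists>ws. set ws \<subseteq> pure_gens n \<union> inv_word ` pure_gens n \<and> h = word_class n (concat ws)"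
  using assms
proof (induction h rule: gen_subgroup.induct)
  case (generator g)
  then obtain w where "w \<in> pure_gens n" "g = word_class n w"
    using pure_generator_word_class by blast
  then show ?case by (intro exI[of _ "[w]"]) auto
next
  case zero
  show ?case by (intro exI[of _ "[]"]) (simp add: word_class_Nil)
next
  case (add a b)
  then obtain wa wb where "set wa \<subseteq> pure_gens n \<union> inv_word ` pure_gens n" "a = word_class n (concat wa)"
    "set wb \<subseteq> pure_gens n \<union> inv_word ` pure_gens n" "b = word_class n (concat wb)"
    by blast
  then show ?case by (intro exI[of _ "wa @ wb"]) (simp add: word_class_append)
next
  case (neg a)
  then obtain wa where "set wa \<subseteq> pure_gens n \<union> inv_word ` pure_gens n" "a = word_class n (concat wa)"
    by blast
  then show ?case
    by (intro exI[of _ "map inv_word (rev wa)"])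
      (auto simp: word_class_inv_word[symmetric] inv_word_concat)
qed

lemma word_class_in_letters: "valid_gen n g \<Longrightarrow> word_class n [(g, False)] \<in> Br.letters"
  unfolding Br.letters_def unfolding gen_y_def gen_y2'_def
  by (cases g) (auto simp: valid_gen_def)

lemma PB_conj_word_class:
  assumes "valid_word n p" and h: "h \<in> Br.PB"
  shows "word_class n p + h - word_class n p \<in> Br.PB"
  using assms(1)
proof (induction p)
  case Nil
  then show ?case using h by (simp add: word_class_Nil)
next
  case (Cons a p)
  obtain g e where a: "a = (g, e)" by (cases a)
  have x: "word_class n [(g, False)] \<in> Br.letters"
    using Cons.prems a by (intro word_class_in_letters) (simp add: valid_word_def)
  have ih: "word_class n p + h - word_class n p \<in> Br.PB"
    using Cons by (simp add: valid_word_def)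
  have "word_class n (a # p) = word_class n [a] + word_class n p"
    using word_class_append[of n "[a]" p] by simp
  then have conj: "word_class n (a # p) + h - word_class n (a # p)
      = word_class n [a] + (word_class n p + h - word_class n p) - word_class n [a]"
    by (simp only: group_normalize)
  show ?case
  proof (cases e)
    case False
    then show ?thesis unfolding conj using Br.letter_conj_mem[OF x ih] a by simp
  next
    case True
    have "word_class n [a] = - word_class n [(g, False)]"
      using word_class_inv_word[of n "[(g, False)]"] a True by (simp add: inv_word_def)
    then have "word_class n [a] + (word_class n p + h - word_class n p) - word_class n [a]
        = - word_class n [(g, False)] + (word_class n p + h - word_class n p)
          + word_class n [(g, False)]"
      by (simp only: group_normalize)
    then show ?thesis unfolding conj using Br.letter_inverse_conj_mem[OF x ih] by simp
  qed
qed

lemma weyl_eq_diff_mem_PB: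
  assumes "weyl_eq n u v"
  shows "word_class n u - word_class n v \<in> Br.PB"
  using assms
proof (induction rule: drel.induct)
  case (refl w)
  then show ?case by (simp add: gen_subgroup.zero)
next
  case (sym u v)
  then show ?case using gen_subgroup.neg[OF sym.IH] by (simp only: minus_diff_eq)
next
  case (trans u v w)
  have "word_class n u - word_class n w
      = (word_class n u - word_class n v) + (word_class n v - word_class n w)"
    by (simp only: group_normalize)
  then show ?case using trans gen_subgroup.add by simp
next
  case (ctxt u v p q)
  have "word_class n (p @ u @ q) - word_class n (p @ v @ q)
      = word_class n (valid_part n p) + (word_class n u - word_class n v)
        - word_class n (valid_part n p)"
    by (simp only: word_class_append word_class_valid_part group_normalize)
  then show ?case using PB_conj_word_class[OF valid_word_valid_part ctxt.IH] by simp
next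
  case (free g b)
  then have "word_class n [(g, b), (g, \<not> b)] = word_class n []"
    by (intro word_class_eqI drel.free) (auto simp: valid_word_def)
  then show ?case by (simp add: gen_subgroup.zero)
next
  case (comm g h)
  then have "word_class n [(g, False), (h, False)] = word_class n [(h, False), (g, False)]"
    by (intro word_class_eqI drel.comm) (auto simp: valid_word_def)
  then show ?case by (simp add: gen_subgroup.zero)
next
  case (braid g h)
  then have "word_class n [(g, False), (h, False), (g, False)]
      = word_class n [(h, False), (g, False), (h, False)]"
    using adj_valid_gen[OF braid] by (intro word_class_eqI drel.braid) (auto simp: valid_word_def)
  then show ?case by (simp add: gen_subgroup.zero)
next
  case (invol g)
  have "word_class n [(g, False), (g, False)] - word_class n []
      = word_class n [(g, False)] + word_class n [(g, False)]"
    using word_class_append[of n "[(g, False)]" "[(g, False)]"] by (simp add: word_class_Nil)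
  then show ?case using Br.letter_double_mem[OF word_class_in_letters[OF invol(2)]] by simp
qed

lemma weyl_trivial_br_eq_concat_pure_gens:
  assumes w: "valid_word n w" "weyl_eq n w []"
  shows "\<exists>ws. set ws \<subseteq> pure_gens n \<union> inv_word ` pure_gens n \<and> br_eq n w (concat ws)"
proof -
  have "word_class n w \<in> Br.PB"
    using weyl_eq_diff_mem_PB[OF w(2)] by (simp add: word_class_Nil)
  then obtain ws where ws: "set ws \<subseteq> pure_gens n \<union> inv_word ` pure_gens n"
    and eq: "word_class n w = word_class n (concat ws)"
    using PB_word_class_concat by blast
  have "valid_word n v" if "v \<in> set ws" for v
    using ws that valid_word_pure_gens[OF n] by auto
  then have "valid_word n (concat ws)" by (auto simp: valid_word_def)
  then have "br_eq n w (concat ws)"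
    using eq w(1) by (simp add: word_class_eq_iff valid_part_id)
  then show ?thesis using ws by blast
qed

end

theorem proposition3p8:
  fixes n :: nat
  assumes "4 \<le> n"
  shows "(\<forall>g \<in> pure_gens n. weyl_eq n g [])
       \<and> (\<forall>w. valid_word n w \<and> weyl_eq n w [] \<longrightarrow>
            (\<exists>ws. set ws \<subseteq> pure_gens n \<union> inv_word ` pure_gens n
                  \<and> br_eq n w (concat ws)))"
proof (intro conjI ballI allI impI)
  fix g assume "g \<in> pure_gens n"
  then show "weyl_eq n g []"
    using pure_gens_positive_palindrome[OF assms] positive_palindrome_weyl_trivial by blast
next
  fix w assume "valid_word n w \<and> weyl_eq n w []"
  then show "\<exists>ws. set ws \<subseteq> pure_gens n \<union> inv_word ` pure_gens n \<and> br_eq n w (concat ws)"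
    using weyl_trivial_br_eq_concat_pure_gens[OF assms] by blast
qed

end
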